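(* Let $\Omega\subset\mathbb{R}^2$ be polygonal with a triangulation $\mathcal{T}_h$, let $j,\ell\ge0$, and for each $T$ let $V(T)$ be a subspace of $[P_r(T)]^2$ defining the discrete weak gradient $\nabla_d$. There exist constants $K$ and $\alpha_1>0$ such that $$a(v,v)+K(v_0,v_0)\ge\alpha_1\big(\|\nabla_dv\|^2+\|v_0\|^2\big)$$ for all $v=\{v_0,v_b\}\in S_h(j,\ell)$.
   Context: Coefficients: $a$ is a symmetric $2\times2$ matrix-valued function with $L^\infty(\Omega)$ entries satisfying $\xi^Ta\xi\ge\alpha\xi^T\xi$ for all $\xi\in\mathbb{R}^2$ with $\alpha>0$; $b\in[L^\infty(\Omega)]^2$; $c\in L^\infty(\Omega)$. $P_j(T)$: polynomials of degree $\le j$ on $T$; $P_\ell(\partial T)$: functions on $\partial T$ that are polynomials of degree $\le\ell$ on each edge. $S_h(j,\ell)$: pairs $v=\{v_0,v_b\}$ with $v_0|_T\in P_j(T)$ for each $T\in\mathcal{T}_h$ and $v_b$ a function on the union of edges with $v_b|_{\partial T}\in P_\ell(\partial T)$. Discrete weak gradient: $\nabla_dv|_T\in V(T)$ is determined by $\int_T\nabla_dv\cdot q=-\int_Tv_0\nabla\cdot q+\int_{\partial T}v_b\,q\cdot\mathbf{n}\,ds$ for all $q\in V(T)$. $\|\cdot\|$ and $(\cdot,\cdot)$ denote the $L^2(\Omega)$ norm and inner product (elementwise for $\nabla_d v$). Bilinear form: $a(w,v)=(a\nabla_dw,\nabla_dv)-(bw_0,\nabla_dv)+(cw_0,v_0)$.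 *)

theory Defs
  imports "HOL-Analysis.Analysis"
begin

definition triangle :: "(real^2) set \<Rightarrow> bool" where
  "triangle T \<longleftrightarrow> (\<exists>A B C. \<not> collinear {A, B, C} \<and> T = convex hull {A, B, C})"

definition tri_vertices :: "(real^2) set \<Rightarrow> (real^2) set" where
  "tri_vertices T = {x. x extreme_point_of T}"

definition tri_edges :: "(real^2) set \<Rightarrow> (real^2) set set" where
  "tri_edges T = {closed_segment A B | A B. A \<in> tri_vertices T \<and> B \<in> tri_vertices T \<and> A \<noteq> B}"

definition triangulation :: "(real^2) set \<Rightarrow> (real^2) set set \<Rightarrow> bool" where
  "triangulation \<Omega> Th \<longleftrightarrow> finite Th \<and> Th \<noteq> {} \<and> (\<forall>T\<in>Th. triangle T) \<and> \<Union>Th = closure \<Omega> \<and>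
     (\<forall>T\<in>Th. \<forall>T'\<in>Th. T \<noteq> T' \<longrightarrow>
        T \<inter> T' = {}
      \<or> (\<exists>p. T \<inter> T' = {p} \<and> p \<in> tri_vertices T \<and> p \<in> tri_vertices T')
      \<or> (T \<inter> T' \<in> tri_edges T \<and> T \<inter> T' \<in> tri_edges T'))"

definition polygonal_domain :: "(real^2) set \<Rightarrow> bool" where
  "polygonal_domain \<Omega> \<longleftrightarrow> open \<Omega> \<and> connected \<Omega> \<and> \<Omega> \<noteq> {} \<and> bounded \<Omega>"

definition poly2 :: "nat \<Rightarrow> (real^2 \<Rightarrow> real) set" where
  "poly2 j = {p. \<exists>c :: nat \<Rightarrow> nat \<Rightarrow> real. \<forall>x.
      p x = (\<Sum>a\<le>j. \<Sum>b\<le>j - a. c a b * (x$1)^a * (x$2)^b)}"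

definition vpoly2 :: "nat \<Rightarrow> (real^2 \<Rightarrow> real^2) set" where
  "vpoly2 r = {q. \<forall>i. (\<lambda>x. q x $ i) \<in> poly2 r}"

definition is_subspace_fun :: "(real^2 \<Rightarrow> real^2) set \<Rightarrow> bool" where
  "is_subspace_fun V \<longleftrightarrow> (\<lambda>x. 0) \<in> V \<and> (\<forall>p\<in>V. \<forall>q\<in>V. (\<lambda>x. p x + q x) \<in> V)
     \<and> (\<forall>s. \<forall>p\<in>V. (\<lambda>x. s *\<^sub>R p x) \<in> V)"

definition divergence :: "(real^2 \<Rightarrow> real^2) \<Rightarrow> real^2 \<Rightarrow> real" where
  "divergence q x = (\<Sum>i\<in>UNIV. (frechet_derivative q (at x)) (axis i 1) $ i)"

definition outward_normal :: "(real^2) set \<Rightarrow> (real^2) set \<Rightarrow> real^2" where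
  "outward_normal T e = (THE n. norm n = 1 \<and> (\<forall>x\<in>e. \<forall>y\<in>e. n \<bullet> (x - y) = 0)
       \<and> (\<forall>x\<in>T. \<forall>y\<in>e. n \<bullet> (x - y) \<le> 0))"

text \<open>Arc-length integral over a segment e (independent of orientation).\<close>
definition edge_integral :: "(real^2) set \<Rightarrow> (real^2 \<Rightarrow> real) \<Rightarrow> real" where
  "edge_integral e f = (let (A, B) = (SOME (A, B). A \<noteq> B \<and> e = closed_segment A B) in
      norm (B - A) * integral {0..1} (\<lambda>t. f ((1 - t) *\<^sub>R A + t *\<^sub>R B)))"

text \<open>Membership in S_h(j,l): v0 is piecewise P_j (on triangle interiors); vb is indexed by
  the edge, and is a polynomial of degree at most l on each edge of the mesh.\<close>
definition in_Sh :: "(real^2) set set \<Rightarrow> nat \<Rightarrow> nat \<Rightarrow> (real^2 \<Rightarrow> real)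
     \<Rightarrow> ((real^2) set \<Rightarrow> real^2 \<Rightarrow> real) \<Rightarrow> bool" where
  "in_Sh Th j l v0 vb \<longleftrightarrow>
     (\<forall>T\<in>Th. \<exists>p\<in>poly2 j. \<forall>x\<in>interior T. v0 x = p x) \<and>
     (\<forall>T\<in>Th. \<forall>e\<in>tri_edges T. \<exists>p\<in>poly2 l. \<forall>x\<in>e. vb e x = p x)"

text \<open>g is the discrete weak gradient of v = {v0, vb}: on each T it coincides (on the interior)
  with the element q0 of V(T) determined by the defining identity.\<close>
definition is_weak_grad :: "(real^2) set set \<Rightarrow> ((real^2) set \<Rightarrow> (real^2 \<Rightarrow> real^2) set)
     \<Rightarrow> (real^2 \<Rightarrow> real) \<Rightarrow> ((real^2) set \<Rightarrow> real^2 \<Rightarrow> real) \<Rightarrow> (real^2 \<Rightarrow> real^2) \<Rightarrow> bool" where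
  "is_weak_grad Th V v0 vb g \<longleftrightarrow>
     (\<forall>T\<in>Th. \<exists>q0\<in>V T. (\<forall>x\<in>interior T. g x = q0 x) \<and>
        (\<forall>q\<in>V T. integral T (\<lambda>x. q0 x \<bullet> q x)
             = - integral T (\<lambda>x. v0 x * divergence q x)
               + (\<Sum>e\<in>tri_edges T. edge_integral e (\<lambda>x. vb e x * (q x \<bullet> outward_normal T e)))))"

definition Linf :: "(real^2) set \<Rightarrow> (real^2 \<Rightarrow> real) \<Rightarrow> bool" where
  "Linf \<Omega> f \<longleftrightarrow> f \<in> borel_measurable (lebesgue_on \<Omega>) \<and> (\<exists>M. AE x in lebesgue_on \<Omega>. \<bar>f x\<bar> \<le> M)"

definition L2ip :: "(real^2) set \<Rightarrow> (real^2 \<Rightarrow> real) \<Rightarrow> (real^2 \<Rightarrow> real) \<Rightarrow> real" where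
  "L2ip \<Omega> u w = integral \<Omega> (\<lambda>x. u x * w x)"

definition L2normsq_vec :: "(real^2) set \<Rightarrow> (real^2 \<Rightarrow> real^2) \<Rightarrow> real" where
  "L2normsq_vec \<Omega> g = integral \<Omega> (\<lambda>x. g x \<bullet> g x)"

text \<open>a(v,v) = (a grad_d v, grad_d v) - (b v0, grad_d v) + (c v0, v0), with g = grad_d v.\<close>
definition bilin_diag :: "(real^2) set \<Rightarrow> (real^2 \<Rightarrow> real^2^2) \<Rightarrow> (real^2 \<Rightarrow> real^2) \<Rightarrow> (real^2 \<Rightarrow> real)
     \<Rightarrow> (real^2 \<Rightarrow> real) \<Rightarrow> (real^2 \<Rightarrow> real^2) \<Rightarrow> real" where
  "bilin_diag \<Omega> a b c v0 g =
     integral \<Omega> (\<lambda>x. (a x *v g x) \<bullet> g x)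
   - integral \<Omega> (\<lambda>x. (v0 x *\<^sub>R b x) \<bullet> g x)
   + integral \<Omega> (\<lambda>x. c x * v0 x * v0 x)"

end

theory Submission
  imports Defs
begin

text \<open>
  Pointwise, with \<open>\<xi> = \<nabla>\<^sub>dv(x)\<close> and \<open>w = v\<^sub>0(x)\<close>,
  ellipticity gives \<open>(a\<xi>)\<cdot>\<xi> \<ge> \<alpha>|\<xi>|\<^sup>2\<close>, Young's inequality absorbs the convection term,
  \<open>|w (b\<cdot>\<xi>)| \<le> \<alpha>/2 |\<xi>|\<^sup>2 + \<parallel>b\<parallel>\<^sub>\<infinity>\<^sup>2/(2\<alpha>) w\<^sup>2\<close>, and \<open>c w\<^sup>2 \<ge> -\<parallel>c\<parallel>\<^sub>\<infinity> w\<^sup>2\<close>;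
  so with \<open>K = \<parallel>b\<parallel>\<^sub>\<infinity>\<^sup>2/(2\<alpha>) + \<parallel>c\<parallel>\<^sub>\<infinity> + \<alpha>/2\<close> the integrand of \<open>a(v,v) + K(v\<^sub>0,v\<^sub>0)\<close>
  dominates \<open>\<alpha>/2 (|\<nabla>\<^sub>dv|\<^sup>2 + v\<^sub>0\<^sup>2)\<close> almost everywhere, and we integrate with \<open>\<alpha>\<^sub>1 = \<alpha>/2\<close>.
  All integrals exist because \<open>v\<^sub>0\<close> and \<open>\<nabla>\<^sub>dv\<close> are polynomials on the interior of each
  triangle, hence bounded and measurable off the null set of triangle boundaries.
\<close>

lemma Linf_const: "Linf S (\<lambda>x. k)"
  unfolding Linf_def by auto

lemma Linf_add:
  assumes "Linf S f" "Linf S g" shows "Linf S (\<lambda>x. f x + g x)"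
proof -
  obtain A B where "AE x in lebesgue_on S. \<bar>f x\<bar> \<le> A" "AE x in lebesgue_on S. \<bar>g x\<bar> \<le> B"
    using assms unfolding Linf_def by blast
  then have "AE x in lebesgue_on S. \<bar>f x + g x\<bar> \<le> A + B"
    by eventually_elim auto
  then show ?thesis using assms unfolding Linf_def by (auto intro!: borel_measurable_add)
qed

lemma Linf_mult:
  assumes "Linf S f" "Linf S g" shows "Linf S (\<lambda>x. f x * g x)"
proof -
  obtain A B where "AE x in lebesgue_on S. \<bar>f x\<bar> \<le> A" "AE x in lebesgue_on S. \<bar>g x\<bar> \<le> B"
    using assms unfolding Linf_def by blast
  then have "AE x in lebesgue_on S. \<bar>f x * g x\<bar> \<le> \<bar>A\<bar> * \<bar>B\<bar>"
    by eventually_elim (simp add: abs_mult mult_mono')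
  then show ?thesis using assms unfolding Linf_def by (auto intro!: borel_measurable_times)
qed

lemma Linf_diff: "Linf S f \<Longrightarrow> Linf S g \<Longrightarrow> Linf S (\<lambda>x. f x - g x)"
  using Linf_add[of S f "\<lambda>x. -1 * g x"] Linf_mult[OF Linf_const, of S g "-1"] by simp

lemma Linf_sum:
  assumes "finite I" "\<And>i. i \<in> I \<Longrightarrow> Linf S (f i)"
  shows "Linf S (\<lambda>x. \<Sum>i\<in>I. f i x)"
  using assms by (induction I rule: finite_induct) (auto intro: Linf_add Linf_const)

lemma Linf_inner:
  fixes u w :: "real^2 \<Rightarrow> real^'n"
  assumes "\<And>i. Linf S (\<lambda>x. u x $ i)" "\<And>i. Linf S (\<lambda>x. w x $ i)"
  shows "Linf S (\<lambda>x. u x \<bullet> w x)"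
  unfolding inner_vec_def inner_real_def using assms by (intro Linf_sum Linf_mult) auto

lemma Linf_matrix_vector_mult:
  fixes A :: "real^2 \<Rightarrow> real^'n^'m" and u :: "real^2 \<Rightarrow> real^'n"
  assumes "\<And>i k. Linf S (\<lambda>x. A x $ i $ k)" "\<And>k. Linf S (\<lambda>x. u x $ k)"
  shows "Linf S (\<lambda>x. (A x *v u x) $ i)"
  unfolding matrix_vector_mult_def using assms by (auto intro!: Linf_sum Linf_mult)

lemma Linf_norm_bound:
  fixes u :: "real^2 \<Rightarrow> real^'n"
  assumes "\<And>i. Linf S (\<lambda>x. u x $ i)"
  obtains B where "AE x in lebesgue_on S. norm (u x) \<le> B"
proof -
  obtain M where M: "\<And>i. AE x in lebesgue_on S. \<bar>u x $ i\<bar> \<le> M i"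
    using assms unfolding Linf_def by metis
  have "AE x in lebesgue_on S. \<forall>i\<in>UNIV. \<bar>u x $ i\<bar> \<le> M i"
    by (rule AE_finite_allI) (use M in auto)
  then have "AE x in lebesgue_on S. norm (u x) \<le> (\<Sum>i\<in>UNIV. M i)"
  proof eventually_elim
    case (elim x)
    then have "(\<Sum>i\<in>UNIV. \<bar>u x $ i\<bar>) \<le> (\<Sum>i\<in>UNIV. M i)"
      by (intro sum_mono) auto
    then show ?case using norm_le_l1_cart[of "u x"] by linarith
  qed
  then show thesis by (rule that)
qed

lemma Linf_integrable:
  assumes "S \<in> lmeasurable" "Linf S f" shows "integrable (lebesgue_on S) f"
proof -
  interpret finite_measure "lebesgue_on S" using finite_measure_lebesgue_on assms(1) .
  obtain A where "AE x in lebesgue_on S. \<bar>f x\<bar> \<le> A" "f \<in> borel_measurable (lebesgue_on S)"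
    using assms unfolding Linf_def by blast
  then show ?thesis by (intro integrable_const_bound[where B=A]) auto
qed

lemma Linf_integrable_on: "S \<in> lmeasurable \<Longrightarrow> Linf S f \<Longrightarrow> f integrable_on S"
  by (simp add: Linf_integrable fmeasurableD integrable_on_lebesgue_on)

lemma integral_mono_AE_Linf:
  assumes S: "S \<in> lmeasurable" and "Linf S f" "Linf S g"
    and "AE x in lebesgue_on S. f x \<le> g x"
  shows "integral S f \<le> integral S g"
proof -
  have eq: "integral S h = integral\<^sup>L (lebesgue_on S) h" if "Linf S h" for h
    using has_integral_integral_lebesgue_on[OF Linf_integrable[OF S that]] S
    by (simp add: integral_unique fmeasurableD)
  show ?thesis
    unfolding eq[OF \<open>Linf S f\<close>] eq[OF \<open>Linf S g\<close>]
    using assms by (intro integral_mono_AE) (auto intro: Linf_integrable)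
qed

lemma continuous_on_poly2: "p \<in> poly2 j \<Longrightarrow> continuous_on S p"
proof -
  assume "p \<in> poly2 j"
  then obtain c where "\<forall>x. p x = (\<Sum>a\<le>j. \<Sum>b\<le>j - a. c a b * (x$1)^a * (x$2)^b)"
    unfolding poly2_def by blast
  then have "p = (\<lambda>x. \<Sum>a\<le>j. \<Sum>b\<le>j - a. c a b * (x$1)^a * (x$2)^b)" by blast
  then show ?thesis by (simp add: continuous_intros)
qed

lemma triangle_compact: "triangle T \<Longrightarrow> compact T"
  unfolding triangle_def by (auto intro: compact_convex_hull)

lemma triangle_convex: "triangle T \<Longrightarrow> convex T"
  unfolding triangle_def by (auto intro: convex_convex_hull)

lemma triangulation_finite: "triangulation \<Omega> Th \<Longrightarrow> finite Th"
  unfolding triangulation_def by simp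

lemma triangulation_triangle: "triangulation \<Omega> Th \<Longrightarrow> T \<in> Th \<Longrightarrow> triangle T"
  unfolding triangulation_def by simp

lemma triangulation_Union: "triangulation \<Omega> Th \<Longrightarrow> \<Union>Th = closure \<Omega>"
  unfolding triangulation_def by simp

lemma triangulation_interiors_disjoint:
  assumes "triangulation \<Omega> Th" "T \<in> Th" "T' \<in> Th" "T \<noteq> T'"
  shows "interior T \<inter> interior T' = {}"
proof -
  from assms consider "T \<inter> T' = {}" | p where "T \<inter> T' = {p}" | "T \<inter> T' \<in> tri_edges T"
    unfolding triangulation_def by blast
  then have "interior (T \<inter> T') = {}"
  proof cases
    case 3
    then obtain A B where "T \<inter> T' = closed_segment A B" unfolding tri_edges_def by blast
    then show ?thesis using interior_closed_segment_ge2[of A B] by simp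
  qed auto
  then show ?thesis by simp
qed

lemma triangulation_frontiers_negligible:
  assumes "triangulation \<Omega> Th"
  shows "negligible (\<Union>T\<in>Th. frontier T)"
proof (rule negligible_Union)
  show "finite (frontier ` Th)"
    using triangulation_finite[OF assms] by simp
  show "negligible S" if S: "S \<in> frontier ` Th" for S
  proof -
    obtain T where "T \<in> Th" "S = frontier T" using S by blast
    with assms show ?thesis
      by (simp add: negligible_convex_frontier triangle_convex triangulation_triangle)
  qed
qed

lemma triangulation_interior_cover:
  assumes "triangulation \<Omega> Th" "x \<in> \<Omega>" "x \<notin> (\<Union>T\<in>Th. frontier T)"
  obtains T where "T \<in> Th" "x \<in> interior T"
proof -
  have "x \<in> \<Union>Th"
    using triangulation_Union[OF assms(1)] assms(2) closure_subset by blast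
  then obtain T where T: "T \<in> Th" "x \<in> T" by blast
  then have "x \<in> interior T"
    using assms(3) closure_subset unfolding frontier_def by blast
  with T show thesis by (intro that)
qed

lemma piecewise_continuous_measurable:
  fixes f :: "real^2 \<Rightarrow> real"
  assumes tri: "triangulation \<Omega> Th" and \<Omega>: "\<Omega> \<in> sets lebesgue"
    and pw: "\<forall>T\<in>Th. \<exists>P. continuous_on T P \<and> (\<forall>x\<in>interior T. f x = P x)"
  shows "f \<in> borel_measurable (lebesgue_on \<Omega>)"
proof -
  obtain P where cont: "\<And>T. T \<in> Th \<Longrightarrow> continuous_on T (P T)"
    and f_eq: "\<And>T x. T \<in> Th \<Longrightarrow> x \<in> interior T \<Longrightarrow> f x = P T x"
    using pw by metis
  define N where "N = (\<Union>T\<in>Th. frontier T)"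
  define h where "h x = (\<Sum>T\<in>Th. if x \<in> interior T then P T x else 0)" for x
  have f_eq_h: "f x = h x" if x: "x \<in> \<Omega> - N" for x
  proof -
    obtain T where T: "T \<in> Th" "x \<in> interior T"
      using triangulation_interior_cover[OF tri] x unfolding N_def by blast
    have "h x = (\<Sum>T'\<in>Th. if T' = T then P T x else 0)"
      unfolding h_def
      using triangulation_interiors_disjoint[OF tri T(1)] T(2) by (intro sum.cong) auto
    then show ?thesis using T triangulation_finite[OF tri] f_eq by simp
  qed
  have "(\<lambda>x. if x \<in> interior T then P T x else 0) measurable_on UNIV" if T: "T \<in> Th" for T
  proof -
    have int: "interior T \<in> sets lebesgue" by auto
    have "continuous_on (interior T) (P T)"
      using cont[OF T] interior_subset by (rule continuous_on_subset)
    then have "P T \<in> borel_measurable (lebesgue_on (interior T))"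
      using int by (rule continuous_imp_measurable_on_sets_lebesgue)
    then show ?thesis
      unfolding measurable_on_UNIV using measurable_on_iff_borel_measurable[OF int] by blast
  qed
  then have "h measurable_on UNIV"
    unfolding h_def using triangulation_finite[OF tri] by (intro measurable_on_sum)
  then have "h measurable_on \<Omega>"
    using measurable_on_restrict[OF _ \<Omega>] measurable_on_UNIV by blast
  then have "f measurable_on \<Omega>"
    using triangulation_frontiers_negligible[OF tri] f_eq_h unfolding N_def
    by (rule measurable_on_spike) simp
  then show ?thesis
    using measurable_on_iff_borel_measurable[OF \<Omega>] by blast
qed

lemma piecewise_continuous_AE_bounded:
  fixes f :: "real^2 \<Rightarrow> real"
  assumes tri: "triangulation \<Omega> Th" and \<Omega>: "\<Omega> \<in> sets lebesgue"
    and pw: "\<forall>T\<in>Th. \<exists>P. continuous_on T P \<and> (\<forall>x\<in>interior T. f x = P x)"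
  obtains B where "AE x in lebesgue_on \<Omega>. \<bar>f x\<bar> \<le> B"
proof -
  obtain P where cont: "\<And>T. T \<in> Th \<Longrightarrow> continuous_on T (P T)"
    and f_eq: "\<And>T x. T \<in> Th \<Longrightarrow> x \<in> interior T \<Longrightarrow> f x = P T x"
    using pw by metis
  define N where "N = (\<Union>T\<in>Th. frontier T)"
  have "bounded (\<Union>T\<in>Th. P T ` T)"
  proof (rule bounded_UN[OF triangulation_finite[OF tri]], intro ballI)
    fix T assume T: "T \<in> Th"
    have "compact (P T ` T)"
      using cont[OF T] triangle_compact[OF triangulation_triangle[OF tri T]]
      by (rule compact_continuous_image)
    then show "bounded (P T ` T)" by (rule compact_imp_bounded)
  qed
  then obtain B where B: "\<forall>y\<in>(\<Union>T\<in>Th. P T ` T). norm y \<le> B"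
    unfolding bounded_iff by blast
  have bound: "\<bar>f x\<bar> \<le> B" if x: "x \<in> \<Omega> - N" for x
  proof -
    obtain T where T: "T \<in> Th" "x \<in> interior T"
      using triangulation_interior_cover[OF tri] x unfolding N_def by blast
    then have "P T x \<in> (\<Union>T\<in>Th. P T ` T)"
      using interior_subset by blast
    then have "norm (P T x) \<le> B" using B by blast
    then show ?thesis using f_eq[OF T] by simp
  qed
  have "AE x in lebesgue. x \<notin> N"
    using triangulation_frontiers_negligible[OF tri] negligible_iff_null_sets AE_not_in
    unfolding N_def by blast
  then have "AE x in lebesgue. x \<in> \<Omega> \<longrightarrow> \<bar>f x\<bar> \<le> B"
    by (rule eventually_mono) (use bound in blast)
  then have "AE x in lebesgue_on \<Omega>. \<bar>f x\<bar> \<le> B"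
    using \<Omega> by (subst AE_restrict_space_iff) auto
  then show thesis by (rule that)
qed

lemma piecewise_continuous_Linf:
  fixes f :: "real^2 \<Rightarrow> real"
  assumes "triangulation \<Omega> Th" "\<Omega> \<in> sets lebesgue"
    and "\<forall>T\<in>Th. \<exists>P. continuous_on T P \<and> (\<forall>x\<in>interior T. f x = P x)"
  shows "Linf \<Omega> f"
  using piecewise_continuous_measurable[OF assms] piecewise_continuous_AE_bounded[OF assms]
  unfolding Linf_def by blast

lemma in_Sh_Linf:
  assumes "triangulation \<Omega> Th" "\<Omega> \<in> sets lebesgue" "in_Sh Th j l v0 vb"
  shows "Linf \<Omega> v0"
proof (rule piecewise_continuous_Linf[OF assms(1,2)], intro ballI)
  fix T assume "T \<in> Th"
  then obtain p where "p \<in> poly2 j" "\<forall>x\<in>interior T. v0 x = p x"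
    using assms(3) unfolding in_Sh_def by blast
  then show "\<exists>P. continuous_on T P \<and> (\<forall>x\<in>interior T. v0 x = P x)"
    using continuous_on_poly2 by blast
qed

lemma weak_grad_Linf:
  assumes "triangulation \<Omega> Th" "\<Omega> \<in> sets lebesgue" "\<forall>T\<in>Th. V T \<subseteq> vpoly2 r"
    and "is_weak_grad Th V v0 vb g"
  shows "Linf \<Omega> (\<lambda>x. g x $ i)"
proof (rule piecewise_continuous_Linf[OF assms(1,2)], intro ballI)
  fix T assume T: "T \<in> Th"
  then obtain q where "q \<in> V T" "\<forall>x\<in>interior T. g x = q x"
    using assms(4) unfolding is_weak_grad_def by blast
  moreover have "q \<in> vpoly2 r" using assms(3) T \<open>q \<in> V T\<close> by blast
  ultimately show "\<exists>P. continuous_on T P \<and> (\<forall>x\<in>interior T. g x $ i = P x)"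
    unfolding vpoly2_def using continuous_on_poly2 by fastforce
qed

lemma young_ineq:
  fixes \<alpha> s t :: real
  assumes "\<alpha> > 0"
  shows "s * t \<le> \<alpha>/2 * s\<^sup>2 + t\<^sup>2 / (2*\<alpha>)"
proof -
  have "0 \<le> (\<alpha> * s - t)\<^sup>2" by simp
  then have "2*\<alpha> * (s * t) \<le> 2*\<alpha> * (\<alpha>/2 * s\<^sup>2 + t\<^sup>2 / (2*\<alpha>))"
    using assms by (simp add: power2_eq_square algebra_simps)
  then show ?thesis using assms by simp
qed

lemma garding_pointwise:
  fixes g bv :: "'a::real_inner" and \<alpha> B C Q c w :: real
  assumes \<alpha>: "\<alpha> > 0" and bv: "norm bv \<le> B" and c: "\<bar>c\<bar> \<le> C" and Q: "\<alpha> * (g \<bullet> g) \<le> Q"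
  shows "\<alpha>/2 * (g \<bullet> g + w * w)
    \<le> Q - (w *\<^sub>R bv) \<bullet> g + c * w * w + (B\<^sup>2 / (2*\<alpha>) + C + \<alpha>/2) * (w * w)"
proof -
  have "norm (w *\<^sub>R bv) \<le> B * \<bar>w\<bar>"
    using bv by (simp add: mult.commute[of B] mult_left_mono)
  then have "(w *\<^sub>R bv) \<bullet> g \<le> norm g * (B * \<bar>w\<bar>)"
    using norm_cauchy_schwarz[of "w *\<^sub>R bv" g]
    by (smt (verit) mult.commute mult_left_mono norm_ge_zero)
  also have "\<dots> \<le> \<alpha>/2 * (norm g)\<^sup>2 + (B * \<bar>w\<bar>)\<^sup>2 / (2*\<alpha>)"
    using \<alpha> by (rule young_ineq)
  also have "\<dots> = \<alpha>/2 * (g \<bullet> g) + B\<^sup>2 / (2*\<alpha>) * (w * w)"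
    by (simp add: power2_norm_eq_inner power_mult_distrib power2_eq_square[of w])
  finally have b_term: "(w *\<^sub>R bv) \<bullet> g \<le> \<alpha>/2 * (g \<bullet> g) + B\<^sup>2 / (2*\<alpha>) * (w * w)" .
  have "- \<bar>c\<bar> * (w * w) \<le> c * (w * w)"
    by (rule mult_right_mono) auto
  moreover have "\<bar>c\<bar> * (w * w) \<le> C * (w * w)"
    using c by (rule mult_right_mono) simp
  ultimately have c_term: "- (C * (w * w)) \<le> c * w * w"
    by (simp add: mult.assoc)
  show ?thesis using b_term c_term Q by (simp add: algebra_simps)
qed

lemma bilin_diag_garding:
  fixes a :: "real^2 \<Rightarrow> real^2^2" and b g :: "real^2 \<Rightarrow> real^2" and c v0 :: "real^2 \<Rightarrow> real"
  assumes \<Omega>: "\<Omega> \<in> lmeasurable" and \<alpha>: "\<alpha> > 0"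
    and La: "\<And>i k. Linf \<Omega> (\<lambda>x. a x $ i $ k)" and Lb: "\<And>i. Linf \<Omega> (\<lambda>x. b x $ i)"
    and Lc: "Linf \<Omega> c" and Lv: "Linf \<Omega> v0" and Lg: "\<And>i. Linf \<Omega> (\<lambda>x. g x $ i)"
    and ell: "AE x in lebesgue_on \<Omega>. \<forall>\<xi>. \<xi> \<bullet> (a x *v \<xi>) \<ge> \<alpha> * (\<xi> \<bullet> \<xi>)"
    and B: "AE x in lebesgue_on \<Omega>. norm (b x) \<le> B"
    and C: "AE x in lebesgue_on \<Omega>. \<bar>c x\<bar> \<le> C"
  shows "\<alpha>/2 * (L2normsq_vec \<Omega> g + L2ip \<Omega> v0 v0)
    \<le> bilin_diag \<Omega> a b c v0 g + (B\<^sup>2 / (2*\<alpha>) + C + \<alpha>/2) * L2ip \<Omega> v0 v0"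
proof -
  define K where "K = B\<^sup>2 / (2*\<alpha>) + C + \<alpha>/2"
  define A where "A x = (a x *v g x) \<bullet> g x" for x
  define D where "D x = (v0 x *\<^sub>R b x) \<bullet> g x" for x
  define G where "G x = g x \<bullet> g x" for x
  define W where "W x = v0 x * v0 x" for x
  have LA: "Linf \<Omega> A" unfolding A_def by (intro Linf_inner Linf_matrix_vector_mult La Lg)
  have LD: "Linf \<Omega> D" unfolding D_def using Lv Lb Lg by (intro Linf_inner) (auto intro: Linf_mult)
  have LG: "Linf \<Omega> G" unfolding G_def by (intro Linf_inner Lg)
  have LW: "Linf \<Omega> W" unfolding W_def by (intro Linf_mult Lv)
  have LcW: "Linf \<Omega> (\<lambda>x. c x * W x)" using Lc LW by (rule Linf_mult)
  note int = Linf_integrable_on[OF \<Omega>]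
  have lhs: "\<alpha>/2 * (L2normsq_vec \<Omega> g + L2ip \<Omega> v0 v0) = integral \<Omega> (\<lambda>x. \<alpha>/2 * (G x + W x))"
    unfolding L2normsq_vec_def L2ip_def G_def[symmetric] W_def[symmetric]
    using int[OF LG] int[OF LW] by (simp add: integral_add)
  have rhs: "bilin_diag \<Omega> a b c v0 g + K * L2ip \<Omega> v0 v0
      = integral \<Omega> (\<lambda>x. A x - D x + c x * W x + K * W x)"
    unfolding bilin_diag_def L2ip_def A_def[symmetric] D_def[symmetric] W_def[symmetric] mult.assoc
    using int[OF LA] int[OF LD] int[OF LcW] int[OF LW]
    by (simp add: integral_add integral_diff integrable_add integrable_diff integrable_on_mult_right)
  have ae: "AE x in lebesgue_on \<Omega>. \<alpha>/2 * (G x + W x) \<le> A x - D x + c x * W x + K * W x"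
    using ell B C
  proof eventually_elim
    case (elim x)
    then have "\<alpha> * G x \<le> A x"
      unfolding A_def G_def by (simp add: inner_commute)
    with elim show ?case
      unfolding D_def G_def W_def K_def using garding_pointwise[OF \<alpha>] by (simp add: mult.assoc)
  qed
  have "integral \<Omega> (\<lambda>x. \<alpha>/2 * (G x + W x)) \<le> integral \<Omega> (\<lambda>x. A x - D x + c x * W x + K * W x)"
    by (rule integral_mono_AE_Linf[OF \<Omega> _ _ ae];
        intro Linf_add Linf_diff Linf_mult Linf_const LA LD LG LW Lc)
  with lhs rhs show ?thesis unfolding K_def by linarith
qed

theorem lemma7p1:
  fixes \<Omega> :: "(real^2) set" and Th :: "(real^2) set set" and j l r :: nat
    and V :: "(real^2) set \<Rightarrow> (real^2 \<Rightarrow> real^2) set"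
    and a :: "real^2 \<Rightarrow> real^2^2" and b :: "real^2 \<Rightarrow> real^2" and c :: "real^2 \<Rightarrow> real"
    and \<alpha> :: real
  assumes "polygonal_domain \<Omega>"
    and "triangulation \<Omega> Th"
    and "\<forall>T\<in>Th. is_subspace_fun (V T) \<and> V T \<subseteq> vpoly2 r"
    and "\<forall>i k. Linf \<Omega> (\<lambda>x. a x $ i $ k)"
    and "AE x in lebesgue_on \<Omega>. transpose (a x) = a x"
    and "\<alpha> > 0"
    and "AE x in lebesgue_on \<Omega>. \<forall>\<xi>. \<xi> \<bullet> (a x *v \<xi>) \<ge> \<alpha> * (\<xi> \<bullet> \<xi>)"
    and "\<forall>i. Linf \<Omega> (\<lambda>x. b x $ i)"
    and "Linf \<Omega> c"
  shows "\<exists>K \<alpha>1. \<alpha>1 > 0 \<and>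
    (\<forall>v0 vb g. in_Sh Th j l v0 vb \<and> is_weak_grad Th V v0 vb g \<longrightarrow>
       bilin_diag \<Omega> a b c v0 g + K * L2ip \<Omega> v0 v0
         \<ge> \<alpha>1 * (L2normsq_vec \<Omega> g + L2ip \<Omega> v0 v0))"
proof -
  have \<Omega>: "\<Omega> \<in> lmeasurable"
    using assms(1) unfolding polygonal_domain_def by (simp add: lmeasurable_open)
  then have \<Omega>_leb: "\<Omega> \<in> sets lebesgue" by (rule fmeasurableD)
  obtain B where B: "AE x in lebesgue_on \<Omega>. norm (b x) \<le> B"
    using Linf_norm_bound assms(8) by blast
  obtain C where C: "AE x in lebesgue_on \<Omega>. \<bar>c x\<bar> \<le> C"
    using assms(9) unfolding Linf_def by blast
  have "\<alpha>/2 * (L2normsq_vec \<Omega> g + L2ip \<Omega> v0 v0)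
      \<le> bilin_diag \<Omega> a b c v0 g + (B\<^sup>2 / (2*\<alpha>) + C + \<alpha>/2) * L2ip \<Omega> v0 v0"
    if "in_Sh Th j l v0 vb" "is_weak_grad Th V v0 vb g" for v0 vb g
    using bilin_diag_garding[OF \<Omega> assms(6)] assms(4,7,8,9) B C
      in_Sh_Linf[OF assms(2) \<Omega>_leb that(1)] weak_grad_Linf[OF assms(2) \<Omega>_leb _ that(2)] assms(3)
    by blast
  then show ?thesis using assms(6) by (intro exI[of _ "B\<^sup>2 / (2*\<alpha>) + C + \<alpha>/2"] exI[of _ "\<alpha>/2"]) auto
qed

end
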